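(* For every single-elimination tournament $\mathcal{T}$ with $n$ players and every scoring system $\sigma$ of $\mathcal{T}$, we have $\dim(\mathcal{T},\sigma)\le n-1$.
   Context: A single-elimination tournament is a finite directed graph $\mathcal{T}$ such that: (a) $\mathcal{T}$ has exactly one sink (vertex with no out-neighbours); (b) every non-sink vertex has exactly one out-neighbour; (c) $\mathcal{T}$ has no directed cycles; (d) $|N^-(v)|\ne 1$ for every vertex $v$, where $N^-(v)$ denotes the set of in-neighbours of $v$. The players $P(\mathcal{T})$ are the sources (vertices with no in-neighbours) and the matches are $M(\mathcal{T})=V(\mathcal{T})\setminus P(\mathcal{T})$. A bracket is a function $B:V(\mathcal{T})\to P(\mathcal{T})$ with $B(a)=a$ for every player $a$ and $B(x)\in\{B(u):u\in N^-(x)\}$ for every match $x$. A scoring system is any function $\sigma:M(\mathcal{T})\to\mathbb{R}_{>0}$. For brackets $B,B'$ let $\mathrm{score}_\sigma(B,B')=\sum_{x\in M(\mathcal{T}):\,B(x)=B'(x)}\sigma(x)$. A set of brackets $\mathcal{B}$ is $\sigma$-resolving if for every pair of distinct brackets $B\ne B'$ there is $B_i\in\mathcal{B}$ with $\mathrm{score}_\sigma(B_i,B)\ne\mathrm{score}_\sigma(B_i,B')$. $\dim(\mathcal{T},\sigma)$ denotes the minimum size of a $\sigma$-resolving set. *)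

theory Defs
  imports Complex_Main "HOL-Library.FuncSet"
begin

definition out_nbrs :: "('v \<times> 'v) set \<Rightarrow> 'v \<Rightarrow> 'v set" where
  "out_nbrs E v = {w. (v, w) \<in> E}"

definition in_nbrs :: "('v \<times> 'v) set \<Rightarrow> 'v \<Rightarrow> 'v set" where
  "in_nbrs E v = {u. (u, v) \<in> E}"

definition sinks :: "'v set \<Rightarrow> ('v \<times> 'v) set \<Rightarrow> 'v set" where
  "sinks V E = {v \<in> V. out_nbrs E v = {}}"

definition single_elim_tournament :: "'v set \<Rightarrow> ('v \<times> 'v) set \<Rightarrow> bool" where
  "single_elim_tournament V E \<longleftrightarrow>
     finite V \<and> E \<subseteq> V \<times> V \<and>
     card (sinks V E) = 1 \<and>
     (\<forall>v \<in> V - sinks V E. card (out_nbrs E v) = 1) \<and>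
     acyclic E \<and>
     (\<forall>v \<in> V. card (in_nbrs E v) \<noteq> 1)"

definition players :: "'v set \<Rightarrow> ('v \<times> 'v) set \<Rightarrow> 'v set" where
  "players V E = {v \<in> V. in_nbrs E v = {}}"

definition matches :: "'v set \<Rightarrow> ('v \<times> 'v) set \<Rightarrow> 'v set" where
  "matches V E = V - players V E"

text \<open>Brackets are functions V \<rightarrow> P(T); outside V they are fixed to undefined
  (extensional), so that distinct brackets are distinct as functions on V.\<close>
definition bracket :: "'v set \<Rightarrow> ('v \<times> 'v) set \<Rightarrow> ('v \<Rightarrow> 'v) \<Rightarrow> bool" where
  "bracket V E B \<longleftrightarrow>
     B \<in> extensional V \<and>
     (\<forall>v \<in> V. B v \<in> players V E) \<and>
     (\<forall>a \<in> players V E. B a = a) \<and>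
     (\<forall>x \<in> matches V E. B x \<in> B ` in_nbrs E x)"

definition scoring_system :: "'v set \<Rightarrow> ('v \<times> 'v) set \<Rightarrow> ('v \<Rightarrow> real) \<Rightarrow> bool" where
  "scoring_system V E \<sigma> \<longleftrightarrow> (\<forall>x \<in> matches V E. \<sigma> x > 0)"

definition score :: "'v set \<Rightarrow> ('v \<times> 'v) set \<Rightarrow> ('v \<Rightarrow> real) \<Rightarrow> ('v \<Rightarrow> 'v) \<Rightarrow> ('v \<Rightarrow> 'v) \<Rightarrow> real" where
  "score V E \<sigma> B B' = (\<Sum>x \<in> {x \<in> matches V E. B x = B' x}. \<sigma> x)"

definition resolving :: "'v set \<Rightarrow> ('v \<times> 'v) set \<Rightarrow> ('v \<Rightarrow> real) \<Rightarrow> ('v \<Rightarrow> 'v) set \<Rightarrow> bool" where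
  "resolving V E \<sigma> S \<longleftrightarrow>
     S \<subseteq> {B. bracket V E B} \<and>
     (\<forall>B B'. bracket V E B \<longrightarrow> bracket V E B' \<longrightarrow> B \<noteq> B' \<longrightarrow>
        (\<exists>Bi \<in> S. score V E \<sigma> Bi B \<noteq> score V E \<sigma> Bi B'))"

definition tdim :: "'v set \<Rightarrow> ('v \<times> 'v) set \<Rightarrow> ('v \<Rightarrow> real) \<Rightarrow> nat" where
  "tdim V E \<sigma> = (LEAST k. \<exists>S. finite S \<and> card S = k \<and> resolving V E \<sigma> S)"

end

theory Submission
  imports Defs
begin

text \<open>Fix a bracket C and a player a0, and for a player p let C_p = promote C p be C changed so
  that p wins every match on its way to the final; the brackets C_p with p \<noteq> a0 are resolving.
  Let B \<noteq> B' and let x be a match where they disagree but below which they agree, with winners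
  a = B x and b = B' x. Matches where B and B' agree count equally against both; at the
  disagreements above x, C_a and C_b can agree only with B and B' respectively; at the remaining
  disagreements, which are incomparable with x, both C_a and C_b coincide with C. Hence
  score(C_a, B) + score(C_b, B') > score(C_a, B') + score(C_b, B), so C_a or C_b distinguishes B
  from B'. This fails only if a0 wins x in B or B' for every such x; then all disagreements lie
  above a0, hence on one path, and for its lowest match x and the winner b \<noteq> a0 of x in B', say,
  C_b alone scores higher against B' than against B.\<close>

lemma acyclic_single_valued_pred_eq:
  assumes "single_valued E" and "acyclic E"
    and "(p, u) \<in> E\<^sup>*" and "(p, z) \<in> E\<^sup>*" and "(u, y) \<in> E" and "(z, y) \<in> E"
  shows "u = z"
proof -
  have "u = z" if uz: "(u, z) \<in> E\<^sup>*" and "(u, y) \<in> E" and "(z, y) \<in> E" for u z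
  proof (rule ccontr)
    assume "u \<noteq> z"
    with uz obtain w where "(u, w) \<in> E" and "(w, z) \<in> E\<^sup>*"
      by (meson rtranclD tranclD)
    with \<open>(u, y) \<in> E\<close> have "(y, z) \<in> E\<^sup>*"
      using single_valuedD[OF assms(1)] by metis
    with \<open>(z, y) \<in> E\<close> have "(y, y) \<in> E\<^sup>+"
      by (meson rtrancl_into_trancl1)
    with assms(2) show False
      unfolding acyclic_def by blast
  qed
  with single_valued_confluent[OF assms(1,3,4)] assms(5,6) show ?thesis
    by metis
qed

lemma arg_min_on_subset_eq:
  fixes g :: "'a \<Rightarrow> 'b :: linorder"
  assumes "inj_on g S" and "finite S" and "S \<noteq> {}" and "T \<subseteq> S" and "arg_min_on g S \<in> T"
  shows "arg_min_on g T = arg_min_on g S"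
proof -
  have "\<forall>q. q \<in> T \<longrightarrow> g (arg_min_on g S) \<le> g q"
    using arg_min_least[OF assms(2,3)] assms(4) by blast
  moreover have "inj_on g {q. q \<in> T}"
    using inj_on_subset[OF assms(1,4)] by simp
  ultimately show ?thesis
    unfolding arg_min_on_def[of g T] using assms(5) by (intro arg_min_inj_eq) auto
qed

lemma no_edge_into_player: "p \<in> players V E \<Longrightarrow> (u, p) \<notin> E"
  unfolding players_def in_nbrs_def by auto

lemma not_player_if_trancl: "(q, p) \<in> E\<^sup>+ \<Longrightarrow> p \<notin> players V E"
  using tranclD2 no_edge_into_player by metis

lemma rtrancl_player_eq: "p \<in> players V E \<Longrightarrow> (q, p) \<in> E\<^sup>* \<Longrightarrow> q = p"
  using not_player_if_trancl rtranclD by metis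

lemma bracket_player: "bracket V E B \<Longrightarrow> v \<in> V \<Longrightarrow> B v \<in> players V E"
  unfolding bracket_def by auto

lemma bracket_at_player: "bracket V E B \<Longrightarrow> p \<in> players V E \<Longrightarrow> B p = p"
  unfolding bracket_def by auto

lemma bracket_at_match:
  assumes "bracket V E B" and "x \<in> matches V E"
  obtains u where "(u, x) \<in> E" and "B x = B u"
  using assms unfolding bracket_def in_nbrs_def by force

lemma brackets_differ_at_match:
  assumes B: "bracket V E B" and B': "bracket V E B'" and "B \<noteq> B'"
  obtains x where "x \<in> matches V E" and "B x \<noteq> B' x"
proof -
  obtain x where x: "B x \<noteq> B' x"
    using assms(3) by blast
  have "x \<in> V"
  proof (rule ccontr)
    assume "x \<notin> V"
    then have "B x = undefined" and "B' x = undefined"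
      using B B' extensional_arb unfolding bracket_def by metis+
    with x show False
      by simp
  qed
  moreover have "x \<notin> players V E"
    using x bracket_at_player[OF B] bracket_at_player[OF B'] by metis
  ultimately show thesis
    using that x unfolding matches_def by blast
qed

lemma tdim_le_card: "finite S \<Longrightarrow> resolving V E \<sigma> S \<Longrightarrow> tdim V E \<sigma> \<le> card S"
  unfolding tdim_def by (rule Least_le) blast

locale in_forest =
  fixes V :: "'v set" and E :: "('v \<times> 'v) set"
  assumes finite_V: "finite V"
    and E_subset: "E \<subseteq> V \<times> V"
    and single_valued_E: "single_valued E"
    and acyclic_E: "acyclic E"

lemma single_elim_tournament_in_forest:
  assumes "single_elim_tournament V E"
  shows "in_forest V E"
proof
  show "finite V" and "E \<subseteq> V \<times> V" and "acyclic E"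
    using assms unfolding single_elim_tournament_def by auto
  show "single_valued E"
  proof (rule single_valuedI)
    fix v w w' assume "(v, w) \<in> E" and "(v, w') \<in> E"
    then have "v \<in> V - sinks V E" and "w \<in> out_nbrs E v" and "w' \<in> out_nbrs E v"
      using \<open>E \<subseteq> V \<times> V\<close> unfolding sinks_def out_nbrs_def by auto
    moreover have "card (out_nbrs E v) = 1"
      using assms \<open>v \<in> V - sinks V E\<close> unfolding single_elim_tournament_def by blast
    ultimately show "w = w'"
      by (auto simp: card_Suc_eq)
  qed
qed

context in_forest
begin

lemma wf_E: "wf E"
  using finite_acyclic_wf finite_subset[OF E_subset] finite_V acyclic_E by blast

lemma rtrancl_closed: "(x, y) \<in> E\<^sup>* \<Longrightarrow> x \<in> V \<Longrightarrow> y \<in> V"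
  by (induction rule: rtrancl_induct) (use E_subset in auto)

lemma finite_players: "finite (players V E)"
  using finite_V unfolding players_def by simp

lemma finite_matches: "finite (matches V E)"
  using finite_V unfolding matches_def by simp

lemma ex_player_rtrancl:
  assumes "x \<in> V"
  shows "\<exists>p \<in> players V E. (p, x) \<in> E\<^sup>*"
proof -
  obtain p where px: "(p, x) \<in> E\<^sup>*" and min: "\<And>u. (u, p) \<in> E \<Longrightarrow> (u, x) \<notin> E\<^sup>*"
    using wfE_min[OF wf_E, of x "{y. (y, x) \<in> E\<^sup>*}"] by auto
  have "p \<in> V"
    using px assms E_subset by (cases rule: converse_rtranclE) auto
  moreover have "in_nbrs E p = {}"
    using min px unfolding in_nbrs_def by (auto intro: converse_rtrancl_into_rtrancl)
  ultimately show ?thesis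
    using px unfolding players_def by blast
qed

lemma bracket_rtrancl:
  assumes B: "bracket V E B"
  shows "v \<in> V \<Longrightarrow> (B v, v) \<in> E\<^sup>*"
proof (induction v rule: wf_induct[OF wf_E])
  case (1 v)
  show ?case
  proof (cases "v \<in> players V E")
    case True
    then show ?thesis
      using bracket_at_player[OF B] by simp
  next
    case False
    with \<open>v \<in> V\<close> obtain u where "(u, v) \<in> E" and "B v = B u"
      using bracket_at_match[OF B] unfolding matches_def by blast
    with 1 E_subset show ?thesis
      by (auto intro: rtrancl_into_rtrancl)
  qed
qed

lemma bracket_trancl:
  assumes "bracket V E B" and "x \<in> matches V E"
  shows "(B x, x) \<in> E\<^sup>+"
proof -
  have "x \<in> V" and "x \<notin> players V E"
    using assms(2) unfolding matches_def by auto
  then show ?thesis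
    using bracket_rtrancl[OF assms(1)] bracket_player[OF assms(1)] by (metis rtranclD)
qed

lemma bracket_eq_along_path:
  assumes B: "bracket V E B" and "(x, y) \<in> E\<^sup>*"
  shows "(p, x) \<in> E\<^sup>* \<Longrightarrow> B y = p \<Longrightarrow> B x = p"
  using \<open>(x, y) \<in> E\<^sup>*\<close>
proof (induction y rule: rtrancl_induct)
  case base
  then show ?case by simp
next
  case (step z y)
  have "y \<in> V"
    using step.hyps(2) E_subset by auto
  moreover have "y \<notin> players V E"
    using step.hyps(2) no_edge_into_player[of y V E z] by blast
  ultimately obtain u where uy: "(u, y) \<in> E" and "B y = B u"
    using bracket_at_match[OF B] unfolding matches_def by blast
  then have "(p, u) \<in> E\<^sup>*"
    using bracket_rtrancl[OF B] E_subset step.prems(2) by auto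
  moreover have "(p, z) \<in> E\<^sup>*"
    using step.prems(1) step.hyps(1) by simp
  ultimately have "u = z"
    using acyclic_single_valued_pred_eq[OF single_valued_E acyclic_E] uy step.hyps(2) by blast
  with step.IH step.prems \<open>B y = B u\<close> show ?case
    by simp
qed

lemma bracket_above_ne_other_winner:
  assumes B: "bracket V E B" and B': "bracket V E B'"
    and "x \<in> matches V E" and "B x \<noteq> B' x" and "(x, y) \<in> E\<^sup>*"
  shows "B y \<noteq> B' x"
  using bracket_eq_along_path[OF B \<open>(x, y) \<in> E\<^sup>*\<close>] bracket_trancl[OF B' \<open>x \<in> matches V E\<close>]
    \<open>B x \<noteq> B' x\<close> by (meson trancl_into_rtrancl)

lemma ex_bracket: "\<exists>C. bracket V E C"
proof -
  let ?P = "players V E"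
  obtain g :: "'v \<Rightarrow> nat" where g: "inj_on g ?P"
    using finite_imp_inj_to_nat_seg[OF finite_players] by blast
  define L where "L x = {p \<in> ?P. (p, x) \<in> E\<^sup>*}" for x
  define C where "C x = (if x \<in> V then arg_min_on g (L x) else undefined)" for x
  have L: "finite (L x)" "L x \<noteq> {}" "inj_on g (L x)" if "x \<in> V" for x
    using finite_players ex_player_rtrancl[OF that] inj_on_subset[OF g] unfolding L_def by auto
  have C_in: "C x \<in> ?P" "(C x, x) \<in> E\<^sup>*" if "x \<in> V" for x
    using arg_min_if_finite(1)[OF L(1,2)[OF that]] that unfolding C_def L_def by auto
  have "bracket V E C"
    unfolding bracket_def
  proof (intro conjI ballI)
    show "C \<in> extensional V"
      unfolding C_def extensional_def by auto
  next
    fix v assume "v \<in> V"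
    then show "C v \<in> ?P"
      using C_in by blast
  next
    fix a assume "a \<in> ?P"
    then show "C a = a"
      using C_in[of a] rtrancl_player_eq[of a V E "C a"] unfolding players_def by simp
  next
    fix x assume "x \<in> matches V E"
    then have "x \<in> V" and "x \<notin> ?P"
      unfolding matches_def by auto
    with C_in obtain u where "(C x, u) \<in> E\<^sup>*" and ux: "(u, x) \<in> E"
      by (metis rtranclD tranclD2)
    moreover have "u \<in> V"
      using ux E_subset by auto
    moreover have "L u \<subseteq> L x"
      using ux unfolding L_def by (auto intro: rtrancl_into_rtrancl)
    moreover have "C x \<in> L u"
      using \<open>(C x, u) \<in> E\<^sup>*\<close> C_in(1)[OF \<open>x \<in> V\<close>] unfolding L_def by simp
    moreover have "C x = arg_min_on g (L x)" and "C u = arg_min_on g (L u)"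
      using \<open>x \<in> V\<close> \<open>u \<in> V\<close> unfolding C_def by simp_all
    ultimately have "C u = C x"
      using arg_min_on_subset_eq[OF L(3,1,2)[OF \<open>x \<in> V\<close>]] by metis
    with ux show "C x \<in> C ` in_nbrs E x"
      unfolding in_nbrs_def by (metis image_eqI mem_Collect_eq)
  qed
  then show ?thesis
    by blast
qed

definition promote :: "('v \<Rightarrow> 'v) \<Rightarrow> 'v \<Rightarrow> 'v \<Rightarrow> 'v" where
  "promote C p x = (if x \<in> V then if (p, x) \<in> E\<^sup>+ then p else C x else undefined)"

lemma promote_above: "y \<in> V \<Longrightarrow> (p, y) \<in> E\<^sup>+ \<Longrightarrow> promote C p y = p"
  unfolding promote_def by simp

lemma promote_not_above: "y \<in> V \<Longrightarrow> (p, y) \<notin> E\<^sup>+ \<Longrightarrow> promote C p y = C y"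
  unfolding promote_def by simp

lemma bracket_promote:
  assumes C: "bracket V E C" and p: "p \<in> players V E"
  shows "bracket V E (promote C p)"
  unfolding bracket_def
proof (intro conjI ballI)
  show "promote C p \<in> extensional V"
    unfolding promote_def extensional_def by simp
next
  fix v assume "v \<in> V"
  then show "promote C p v \<in> players V E"
    using p bracket_player[OF C] unfolding promote_def by simp
next
  fix a assume a: "a \<in> players V E"
  then have "a \<in> V" and "(p, a) \<notin> E\<^sup>+"
    using not_player_if_trancl[of p a E V] unfolding players_def by auto
  then show "promote C p a = a"
    using promote_not_above bracket_at_player[OF C a] by simp
next
  fix x assume x: "x \<in> matches V E"
  then have "x \<in> V"
    unfolding matches_def by simp
  obtain u where ux: "(u, x) \<in> E" and "promote C p x = promote C p u"
  proof (cases "(p, x) \<in> E\<^sup>+")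
    case True
    then obtain u where pu: "(p, u) \<in> E\<^sup>*" and ux: "(u, x) \<in> E"
      by (meson tranclD2)
    have "u \<in> V"
      using ux E_subset by auto
    have "promote C p u = p"
    proof (cases "(p, u) \<in> E\<^sup>+")
      case False
      with pu have "u = p"
        by (metis rtranclD)
      with False \<open>u \<in> V\<close> show ?thesis
        using promote_not_above bracket_at_player[OF C p] by simp
    qed (use \<open>u \<in> V\<close> promote_above in simp)
    with True \<open>x \<in> V\<close> ux that show thesis
      using promote_above by simp
  next
    case False
    obtain u where ux: "(u, x) \<in> E" and "C x = C u"
      using bracket_at_match[OF C x] by blast
    moreover have "u \<in> V" and "(p, u) \<notin> E\<^sup>+"
      using ux False E_subset by (auto intro: trancl_into_trancl)
    ultimately show thesis
      using that False \<open>x \<in> V\<close> promote_not_above by metis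
  qed
  then show "promote C p x \<in> promote C p ` in_nbrs E x"
    unfolding in_nbrs_def by (metis image_eqI mem_Collect_eq)
qed

lemma promote_winner_above:
  assumes "bracket V E B" and "x \<in> matches V E" and "(x, y) \<in> E\<^sup>*"
  shows "promote C (B x) y = B x"
proof (rule promote_above)
  show "y \<in> V"
    using assms(2,3) rtrancl_closed unfolding matches_def by blast
  show "(B x, y) \<in> E\<^sup>+"
    using bracket_trancl[OF assms(1,2)] assms(3) by (rule trancl_rtrancl_trancl)
qed

lemma promote_winner_incomparable:
  assumes "bracket V E B" and "x \<in> matches V E" and "y \<in> V"
    and "(x, y) \<notin> E\<^sup>*" and "(y, x) \<notin> E\<^sup>+"
  shows "promote C (B x) y = C y"
proof (rule promote_not_above[OF \<open>y \<in> V\<close>])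
  show "(B x, y) \<notin> E\<^sup>+"
  proof
    assume "(B x, y) \<in> E\<^sup>+"
    moreover have "(B x, x) \<in> E\<^sup>+"
      using bracket_trancl[OF assms(1,2)] .
    ultimately have "(x, y) \<in> E\<^sup>* \<or> (y, x) \<in> E\<^sup>*"
      using single_valued_confluent[OF single_valued_E] by (meson trancl_into_rtrancl)
    with assms(4,5) show False
      by (metis rtranclD rtrancl.rtrancl_refl)
  qed
qed

lemma score_eq_sum_if:
  "score V E \<sigma> Q B = (\<Sum>y\<in>matches V E. if Q y = B y then \<sigma> y else 0)"
  using finite_matches unfolding score_def by (simp add: sum.inter_filter)

lemma score_promote_swap_less:
  assumes \<sigma>: "scoring_system V E \<sigma>" and B: "bracket V E B" and B': "bracket V E B'"
    and x: "x \<in> matches V E" and "B x \<noteq> B' x"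
    and minimal: "\<And>y. y \<in> matches V E \<Longrightarrow> B y \<noteq> B' y \<Longrightarrow> (y, x) \<notin> E\<^sup>+"
  shows "score V E \<sigma> (promote C (B x)) B' + score V E \<sigma> (promote C (B' x)) B
       < score V E \<sigma> (promote C (B x)) B + score V E \<sigma> (promote C (B' x)) B'"
proof -
  let ?Qa = "promote C (B x)" and ?Qb = "promote C (B' x)"
  define f where "f y = (if ?Qa y = B' y then \<sigma> y else 0) + (if ?Qb y = B y then \<sigma> y else 0)" for y
  define g where "g y = (if ?Qa y = B y then \<sigma> y else 0) + (if ?Qb y = B' y then \<sigma> y else 0)" for y
  have pointwise: "f y \<le> g y \<and> (y = x \<longrightarrow> f y < g y)" if y: "y \<in> matches V E" for y
  proof -
    have "\<sigma> y > 0" and "y \<in> V"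
      using \<sigma> y unfolding scoring_system_def matches_def by auto
    consider "B y = B' y" | "B y \<noteq> B' y" "(x, y) \<in> E\<^sup>*" | "B y \<noteq> B' y" "(x, y) \<notin> E\<^sup>*"
      by blast
    then show ?thesis
    proof cases
      case 1
      with \<open>B x \<noteq> B' x\<close> show ?thesis
        unfolding f_def g_def by auto
    next
      case 2
      have "?Qa y = B x" and "?Qb y = B' x"
        using promote_winner_above[OF B x 2(2)] promote_winner_above[OF B' x 2(2)] .
      moreover have "B' y \<noteq> B x" and "B y \<noteq> B' x"
        using bracket_above_ne_other_winner[OF B' B x _ 2(2)] bracket_above_ne_other_winner[OF B B' x _ 2(2)]
          \<open>B x \<noteq> B' x\<close> by auto
      ultimately show ?thesis
        using \<open>\<sigma> y > 0\<close> unfolding f_def g_def by auto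
    next
      case 3
      have "(y, x) \<notin> E\<^sup>+"
        using minimal[OF y 3(1)] .
      then have "?Qa y = ?Qb y"
        using promote_winner_incomparable[OF B x \<open>y \<in> V\<close> 3(2)]
          promote_winner_incomparable[OF B' x \<open>y \<in> V\<close> 3(2)] by simp
      moreover have "y \<noteq> x"
        using 3(2) by auto
      ultimately show ?thesis
        unfolding f_def g_def by simp
    qed
  qed
  have "sum f (matches V E) < sum g (matches V E)"
  proof (rule sum_strict_mono_ex1[OF finite_matches])
    show "\<forall>y\<in>matches V E. f y \<le> g y" and "\<exists>y\<in>matches V E. f y < g y"
      using pointwise x by blast+
  qed
  then show ?thesis
    unfolding score_eq_sum_if f_def g_def by (simp add: sum.distrib)
qed

lemma score_promote_less:
  assumes \<sigma>: "scoring_system V E \<sigma>" and B: "bracket V E B" and B': "bracket V E B'"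
    and x: "x \<in> matches V E" and "B x \<noteq> B' x"
    and least: "\<And>y. y \<in> matches V E \<Longrightarrow> B y \<noteq> B' y \<Longrightarrow> (x, y) \<in> E\<^sup>*"
  shows "score V E \<sigma> (promote C (B' x)) B < score V E \<sigma> (promote C (B' x)) B'"
proof -
  let ?Q = "promote C (B' x)"
  define f where "f y = (if ?Q y = B y then \<sigma> y else 0)" for y
  define g where "g y = (if ?Q y = B' y then \<sigma> y else 0)" for y
  have pointwise: "f y \<le> g y \<and> (y = x \<longrightarrow> f y < g y)" if y: "y \<in> matches V E" for y
  proof (cases "B y = B' y")
    case True
    with \<open>B x \<noteq> B' x\<close> show ?thesis
      unfolding f_def g_def by auto
  next
    case False
    then have "(x, y) \<in> E\<^sup>*"
      using least[OF y] by blast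
    then have "?Q y = B' x" and "B y \<noteq> B' x"
      using promote_winner_above[OF B' x] bracket_above_ne_other_winner[OF B B' x \<open>B x \<noteq> B' x\<close>]
      by blast+
    moreover have "\<sigma> y > 0"
      using \<sigma> y unfolding scoring_system_def by auto
    ultimately have "f y = 0" and "g y \<ge> 0"
      unfolding f_def g_def by simp_all
    moreover have "g y = \<sigma> y" if "y = x"
      using \<open>?Q y = B' x\<close> that unfolding g_def by simp
    ultimately show ?thesis
      using \<open>\<sigma> y > 0\<close> by auto
  qed
  have "sum f (matches V E) < sum g (matches V E)"
  proof (rule sum_strict_mono_ex1[OF finite_matches])
    show "\<forall>y\<in>matches V E. f y \<le> g y" and "\<exists>y\<in>matches V E. f y < g y"
      using pointwise x by blast+
  qed
  then show ?thesis
    unfolding score_eq_sum_if f_def g_def .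
qed

lemma ex_minimal_disagreement_below:
  assumes "y \<in> matches V E" and "B y \<noteq> B' y"
  obtains x where "x \<in> matches V E" and "B x \<noteq> B' x" and "(x, y) \<in> E\<^sup>*"
    and "\<And>z. z \<in> matches V E \<Longrightarrow> B z \<noteq> B' z \<Longrightarrow> (z, x) \<notin> E\<^sup>+"
proof -
  let ?D = "{x \<in> matches V E. B x \<noteq> B' x \<and> (x, y) \<in> E\<^sup>*}"
  obtain x where x: "x \<in> ?D" and min: "\<And>z. (z, x) \<in> E\<^sup>+ \<Longrightarrow> z \<notin> ?D"
    using wfE_min[OF wf_trancl[OF wf_E], of y ?D] assms by auto
  have "(z, x) \<notin> E\<^sup>+" if "z \<in> matches V E" and "B z \<noteq> B' z" for z
    using min[of z] that x by (auto dest: trancl_into_rtrancl intro: rtrancl_trans)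
  with x that show thesis
    by blast
qed

lemma bracket_winner_player:
  assumes "bracket V E B" and "x \<in> matches V E"
  shows "B x \<in> players V E"
  using bracket_player[OF assms(1)] assms(2) unfolding matches_def by blast

lemma promote_distinguishes_if_disagreement_not_above:
  assumes \<sigma>: "scoring_system V E \<sigma>" and B: "bracket V E B" and B': "bracket V E B'"
    and y: "y \<in> matches V E" "B y \<noteq> B' y" and "(a0, y) \<notin> E\<^sup>+"
  shows "\<exists>p \<in> players V E - {a0}. score V E \<sigma> (promote C p) B \<noteq> score V E \<sigma> (promote C p) B'"
proof -
  obtain x where x: "x \<in> matches V E" and "B x \<noteq> B' x" and "(x, y) \<in> E\<^sup>*"
    and minimal: "\<And>z. z \<in> matches V E \<Longrightarrow> B z \<noteq> B' z \<Longrightarrow> (z, x) \<notin> E\<^sup>+"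
    by (rule ex_minimal_disagreement_below[of y B B', OF y]) blast
  have "(B x, y) \<in> E\<^sup>+" and "(B' x, y) \<in> E\<^sup>+"
    using bracket_trancl[OF B x] bracket_trancl[OF B' x] \<open>(x, y) \<in> E\<^sup>*\<close>
    by (blast intro: trancl_rtrancl_trancl)+
  with \<open>(a0, y) \<notin> E\<^sup>+\<close> have "B x \<in> players V E - {a0}" and "B' x \<in> players V E - {a0}"
    using bracket_winner_player[OF B x] bracket_winner_player[OF B' x] by auto
  moreover have "score V E \<sigma> (promote C (B x)) B \<noteq> score V E \<sigma> (promote C (B x)) B'
      \<or> score V E \<sigma> (promote C (B' x)) B \<noteq> score V E \<sigma> (promote C (B' x)) B'"
    using score_promote_swap_less[OF \<sigma> B B' x \<open>B x \<noteq> B' x\<close> minimal, of C] by linarith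
  ultimately show ?thesis
    by blast
qed

lemma promote_distinguishes_if_disagreements_above:
  assumes \<sigma>: "scoring_system V E \<sigma>" and B: "bracket V E B" and B': "bracket V E B'"
    and "B \<noteq> B'"
    and above_a0: "\<And>z. z \<in> matches V E \<Longrightarrow> B z \<noteq> B' z \<Longrightarrow> (a0, z) \<in> E\<^sup>*"
  shows "\<exists>p \<in> players V E - {a0}. score V E \<sigma> (promote C p) B \<noteq> score V E \<sigma> (promote C p) B'"
proof -
  obtain y where y: "y \<in> matches V E" "B y \<noteq> B' y"
    using brackets_differ_at_match[OF B B' \<open>B \<noteq> B'\<close>] .
  obtain x where x: "x \<in> matches V E" and "B x \<noteq> B' x"
    and minimal: "\<And>z. z \<in> matches V E \<Longrightarrow> B z \<noteq> B' z \<Longrightarrow> (z, x) \<notin> E\<^sup>+"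
    by (rule ex_minimal_disagreement_below[of y B B', OF y]) blast
  have least: "(x, z) \<in> E\<^sup>*" if "z \<in> matches V E" and "B z \<noteq> B' z" for z
  proof -
    have "(x, z) \<in> E\<^sup>* \<or> (z, x) \<in> E\<^sup>*"
      using single_valued_confluent[OF single_valued_E above_a0[OF x \<open>B x \<noteq> B' x\<close>]
          above_a0[OF that]] .
    with minimal[OF that] show ?thesis
      by (metis rtranclD rtrancl.rtrancl_refl)
  qed
  consider "B' x \<noteq> a0" | "B x \<noteq> a0"
    using \<open>B x \<noteq> B' x\<close> by blast
  then show ?thesis
  proof cases
    case 1
    have "score V E \<sigma> (promote C (B' x)) B \<noteq> score V E \<sigma> (promote C (B' x)) B'"
      using score_promote_less[OF \<sigma> B B' x \<open>B x \<noteq> B' x\<close> least, of C] by simp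
    with 1 bracket_winner_player[OF B' x] show ?thesis
      by blast
  next
    case 2
    have "(x, z) \<in> E\<^sup>*" if "z \<in> matches V E" and "B' z \<noteq> B z" for z
      using least that by metis
    then have "score V E \<sigma> (promote C (B x)) B \<noteq> score V E \<sigma> (promote C (B x)) B'"
      using score_promote_less[OF \<sigma> B' B x \<open>B x \<noteq> B' x\<close>[symmetric], of C] by simp
    with 2 bracket_winner_player[OF B x] show ?thesis
      by blast
  qed
qed

lemma resolving_promote:
  assumes \<sigma>: "scoring_system V E \<sigma>" and C: "bracket V E C" and a0: "a0 \<in> players V E"
  shows "resolving V E \<sigma> (promote C ` (players V E - {a0}))"
  unfolding resolving_def
proof (intro conjI allI impI)
  show "promote C ` (players V E - {a0}) \<subseteq> {B. bracket V E B}"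
    using bracket_promote[OF C] by auto
  fix B B' assume B: "bracket V E B" and B': "bracket V E B'" and "B \<noteq> B'"
  have "\<exists>p \<in> players V E - {a0}. score V E \<sigma> (promote C p) B \<noteq> score V E \<sigma> (promote C p) B'"
  proof (cases "\<exists>y \<in> matches V E. B y \<noteq> B' y \<and> (a0, y) \<notin> E\<^sup>+")
    case True
    then obtain y where "y \<in> matches V E" and "B y \<noteq> B' y" and "(a0, y) \<notin> E\<^sup>+"
      by blast
    then show ?thesis
      by (rule promote_distinguishes_if_disagreement_not_above[OF \<sigma> B B'])
  next
    case False
    then have "(a0, z) \<in> E\<^sup>*" if "z \<in> matches V E" and "B z \<noteq> B' z" for z
      using that by (blast intro: trancl_into_rtrancl)
    then show ?thesis
      by (rule promote_distinguishes_if_disagreements_above[OF \<sigma> B B' \<open>B \<noteq> B'\<close>])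
  qed
  then show "\<exists>Q \<in> promote C ` (players V E - {a0}). score V E \<sigma> Q B \<noteq> score V E \<sigma> Q B'"
    by blast
qed

end

theorem theorem1p6:
  fixes V :: "'v set" and E :: "('v \<times> 'v) set" and \<sigma> :: "'v \<Rightarrow> real"
  assumes "single_elim_tournament V E"
    and "scoring_system V E \<sigma>"
  shows "tdim V E \<sigma> \<le> card (players V E) - 1"
proof -
  interpret in_forest V E
    using assms(1) by (rule single_elim_tournament_in_forest)
  have "V \<noteq> {}"
    using assms(1) unfolding single_elim_tournament_def sinks_def by auto
  then obtain a0 where a0: "a0 \<in> players V E"
    using ex_player_rtrancl by blast
  obtain C where C: "bracket V E C"
    using ex_bracket by blast
  have "tdim V E \<sigma> \<le> card (promote C ` (players V E - {a0}))"
    using finite_players by (intro tdim_le_card resolving_promote[OF assms(2) C a0]) simp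
  also have "\<dots> \<le> card (players V E - {a0})"
    using finite_players by (intro card_image_le) simp
  also have "\<dots> = card (players V E) - 1"
    using a0 finite_players by simp
  finally show ?thesis .
qed

end
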